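(* The formal power series \[ \Phi(x,x)=\sum_{m\ge1}\sum_{n\ge1}\gcd(m,n)\,x^{m+n}\qquad\text{and}\qquad \sum_{n\ge1}\Big(\sum_{d\mid n}\frac{\phi(d)}{d}\Big)n\,x^n \] in $\mathbb{C}((x))$ are transcendental over $\mathbb{C}(x)$.
   Context: $\phi$ is Euler's totient function; $\mathbb{C}((x))$ is the field of formal Laurent series in $x$ with complex coefficients, containing the field $\mathbb{C}(x)$ of rational functions. *)

theory Defs
  imports "HOL-Computational_Algebra.Computational_Algebra" "HOL-Number_Theory.Totient"
begin

definition rat_funs_fls :: "complex fls set" where
  "rat_funs_fls = {fps_to_fls (fps_of_poly p) / fps_to_fls (fps_of_poly q) | p q. q \<noteq> 0}"

definition algebraic_over_rat_funs :: "complex fls \<Rightarrow> bool" where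
  "algebraic_over_rat_funs f \<longleftrightarrow>
     (\<exists>P :: complex fls poly. P \<noteq> 0 \<and> (\<forall>i. coeff P i \<in> rat_funs_fls) \<and> poly P f = 0)"

definition transcendental_over_rat_funs :: "complex fls \<Rightarrow> bool" where
  "transcendental_over_rat_funs f \<longleftrightarrow> \<not> algebraic_over_rat_funs f"

text \<open>Phi(x,x) = sum_{m,n>=1} gcd(m,n) x^(m+n): coefficient of x^N is
  sum over m = 1..N-1 of gcd(m, N-m).\<close>
definition Phi_diag :: "complex fls" where
  "Phi_diag = fps_to_fls (Abs_fps (\<lambda>N. \<Sum>m=1..<N. of_nat (gcd m (N - m))))"

definition totient_series :: "complex fls" where
  "totient_series = fps_to_fls (Abs_fps (\<lambda>n. if n = 0 then 0 else
      (\<Sum>d\<in>{d. d dvd n}. of_nat (totient d) / of_nat d) * of_nat n))"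

end

(* Both series have nonnegative coefficients: the coefficient of x^n in the second one is
   Pillai's gcd sum P(n) = sum_{m=1..n} gcd(m, n) = sum_{d | n} phi(d) n / d, and that of
   Phi(x, x) is P(n) - n. The Lambert series sum_n P(n) x^n = sum_d phi(d) x^d / (1 - x^d)^2
   shows that G(s) = s^2 F(1 - s) tends to infinity as s -> 0+, because sum_d phi(d) / d^2
   diverges, but only like O(log(1/s)), because phi(d) <= d.
   Such growth is incompatible with an algebraic relation sum_i c_i(x) F^i = 0 over C[x]:
   after substituting x = 1 - s and writing the relation in terms of G, the term of least
   order of vanishing at s = 0, and among those the one of highest degree in G, dominates all
   others, since every positive power of s beats every power of log(1/s). *)

theory Submission
  imports Defs "HOL-Analysis.FPS_Convergence" "HOL-Analysis.Harmonic_Numbers" "HOL-Real_Asymp.Real_Asymp"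
begin

section \<open>From an algebraic relation to a relation near x = 1\<close>

lemma fps_to_fls_sum: "fps_to_fls (\<Sum>i\<in>A. f i) = (\<Sum>i\<in>A. fps_to_fls (f i))"
  by (induction A rule: infinite_finite_induct) auto

lemma rat_funs_fls_common_denominator:
  fixes D :: nat
  assumes "\<And>i. i \<le> D \<Longrightarrow> f i \<in> rat_funs_fls"
  obtains q c where "q \<noteq> 0"
    and "\<And>i. i \<le> D \<Longrightarrow> f i * fps_to_fls (fps_of_poly q) = fps_to_fls (fps_of_poly (c i))"
proof -
  define \<iota> where "\<iota> p = fps_to_fls (fps_of_poly p)" for p :: "complex poly"
  have \<iota>_mult: "\<iota> (p * q) = \<iota> p * \<iota> q" for p q
    unfolding \<iota>_def by (simp add: fps_of_poly_mult fls_times_fps_to_fls)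
  have \<iota>_eq_0: "\<iota> p = 0 \<longleftrightarrow> p = 0" for p
    unfolding \<iota>_def by (simp add: fps_of_poly_eq_iff[of p 0, simplified])
  have "\<forall>i. \<exists>a b. i \<le> D \<longrightarrow> b \<noteq> 0 \<and> f i = \<iota> a / \<iota> b"
    using assms unfolding rat_funs_fls_def \<iota>_def by blast
  then obtain A B where B: "\<And>i. i \<le> D \<Longrightarrow> B i \<noteq> 0"
    and AB: "\<And>i. i \<le> D \<Longrightarrow> f i = \<iota> (A i) / \<iota> (B i)"
    by metis
  show ?thesis
  proof (rule that)
    show "(\<Prod>j\<le>D. B j) \<noteq> 0"
      using B by simp
    fix i
    assume "i \<le> D"
    then have "\<iota> (\<Prod>j\<le>D. B j) = \<iota> (B i) * \<iota> (\<Prod>j\<in>{..D}-{i}. B j)"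
      by (simp add: prod.remove \<iota>_mult)
    then have "f i * \<iota> (\<Prod>j\<le>D. B j) = \<iota> (A i * (\<Prod>j\<in>{..D}-{i}. B j))"
      using AB[OF \<open>i \<le> D\<close>] B[OF \<open>i \<le> D\<close>] \<iota>_eq_0 by (simp add: \<iota>_mult field_simps)
    then show "f i * fps_to_fls (fps_of_poly (\<Prod>j\<le>D. B j))
        = fps_to_fls (fps_of_poly (A i * (\<Prod>j\<in>{..D}-{i}. B j)))"
      by (simp only: \<iota>_def)
  qed
qed

lemma algebraic_over_rat_funs_imp_poly_relation:
  assumes "algebraic_over_rat_funs (fps_to_fls F)"
  obtains c :: "nat \<Rightarrow> complex poly" and D
  where "\<exists>i\<le>D. c i \<noteq> 0" and "(\<Sum>i\<le>D. fps_of_poly (c i) * F ^ i) = 0"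
proof -
  obtain P :: "complex fls poly"
    where P: "P \<noteq> 0" "\<And>i. coeff P i \<in> rat_funs_fls" "poly P (fps_to_fls F) = 0"
    using assms unfolding algebraic_over_rat_funs_def by blast
  obtain q c where "q \<noteq> 0" and c: "\<And>i. i \<le> degree P \<Longrightarrow>
      coeff P i * fps_to_fls (fps_of_poly q) = fps_to_fls (fps_of_poly (c i))"
    using rat_funs_fls_common_denominator[of "degree P" "coeff P"] P(2) by blast
  have "fps_to_fls (\<Sum>i\<le>degree P. fps_of_poly (c i) * F ^ i)
      = (\<Sum>i\<le>degree P. fps_to_fls (fps_of_poly (c i)) * fps_to_fls F ^ i)"
    by (simp add: fps_to_fls_sum fls_times_fps_to_fls fps_to_fls_power)
  also have "\<dots> = (\<Sum>i\<le>degree P. coeff P i * fps_to_fls (fps_of_poly q) * fps_to_fls F ^ i)"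
    by (rule sum.cong[OF refl]) (simp add: c)
  also have "\<dots> = fps_to_fls (fps_of_poly q) * poly P (fps_to_fls F)"
    by (simp add: poly_altdef sum_distrib_left mult_ac)
  finally have "(\<Sum>i\<le>degree P. fps_of_poly (c i) * F ^ i) = 0"
    using P(3) by simp
  moreover have "c (degree P) \<noteq> 0"
    using c[of "degree P"] P(1) \<open>q \<noteq> 0\<close> by (auto simp: fps_of_poly_eq_iff[of _ 0, simplified])
  ultimately show ?thesis
    using that by blast
qed

lemma fps_conv_radius_sum_gt:
  fixes f :: "'i \<Rightarrow> 'a::{banach,real_normed_div_algebra} fps"
  assumes "\<And>i. i \<in> A \<Longrightarrow> ereal r < fps_conv_radius (f i)"
  shows "ereal r < fps_conv_radius (\<Sum>i\<in>A. f i)"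
  using assms
proof (induction A rule: infinite_finite_induct)
  case (insert i A)
  then have "ereal r < min (fps_conv_radius (f i)) (fps_conv_radius (\<Sum>i\<in>A. f i))"
    by simp
  also have "\<dots> \<le> fps_conv_radius (f i + (\<Sum>i\<in>A. f i))"
    by (rule fps_conv_radius_add)
  finally show ?case
    using insert by simp
qed auto

lemma eval_fps_sum:
  fixes f :: "'i \<Rightarrow> 'a::{banach,real_normed_field} fps"
  assumes "\<And>i. i \<in> A \<Longrightarrow> norm z < fps_conv_radius (f i)"
  shows "eval_fps (\<Sum>i\<in>A. f i) z = (\<Sum>i\<in>A. eval_fps (f i) z)"
  using assms
proof (induction A rule: infinite_finite_induct)
  case (insert i A)
  then show ?case
    using fps_conv_radius_sum_gt[of A "norm z" f] by (simp add: eval_fps_add)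
qed auto

lemma eval_fps_poly_relation:
  fixes F :: "'a::{banach,real_normed_field} fps"
  assumes "norm z < fps_conv_radius F"
  shows "eval_fps (\<Sum>i\<in>A. fps_of_poly (c i) * F ^ i) z = (\<Sum>i\<in>A. poly (c i) z * eval_fps F z ^ i)"
proof -
  have "norm z < fps_conv_radius (fps_of_poly (c i) * F ^ i)" for i
  proof -
    have "norm z < min (fps_conv_radius (fps_of_poly (c i))) (fps_conv_radius (F ^ i))"
      using assms fps_conv_radius_power[of F i] by simp
    also have "\<dots> \<le> fps_conv_radius (fps_of_poly (c i) * F ^ i)"
      by (rule fps_conv_radius_mult)
    finally show ?thesis .
  qed
  then show ?thesis
    using assms fps_conv_radius_power[of F]
    by (simp add: eval_fps_sum eval_fps_mult eval_fps_power less_le_trans)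
qed

lemma fps_conv_radius_ge_1_if_summable:
  fixes a :: "nat \<Rightarrow> real"
  assumes "\<And>r. 0 < r \<Longrightarrow> r < 1 \<Longrightarrow> summable (\<lambda>n. a n * r ^ n)"
  shows "1 \<le> fps_conv_radius (Abs_fps (\<lambda>n. of_real (a n)) :: complex fps)"
  unfolding fps_conv_radius_def
proof (rule conv_radius_geI_ex')
  fix r :: real
  assume "0 < r" "ereal r < 1"
  then have "summable (\<lambda>n. of_real (a n * r ^ n) :: complex)"
    using assms[of r] by (simp only: summable_of_real_iff) simp
  then show "summable (\<lambda>n. fps_nth (Abs_fps (\<lambda>n. of_real (a n))) n * of_real r ^ n :: complex)"
    by simp
qed

lemma eval_fps_Abs_fps_of_real:
  assumes "summable (\<lambda>n. a n * r ^ n)"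
  shows "eval_fps (Abs_fps (\<lambda>n. of_real (a n)) :: complex fps) (of_real r) = of_real (\<Sum>n. a n * r ^ n)"
  unfolding eval_fps_def using assms by (simp add: suminf_of_real)

lemma poly_relation_at_1:
  fixes F :: "complex fps" and s :: real
  assumes radius: "1 \<le> fps_conv_radius F"
    and relation: "(\<Sum>i\<le>D. fps_of_poly (c i) * F ^ i) = 0"
    and "0 < s" "s < 1"
  shows "(\<Sum>i\<le>D. poly (pcompose (c i) [:1, -1:] * monom 1 (2 * (D - i))) (of_real s)
      * (of_real (s\<^sup>2) * eval_fps F (of_real (1 - s))) ^ i) = 0"
proof -
  define x :: complex where "x = of_real (1 - s)"
  have "norm x = 1 - s"
    using assms unfolding x_def norm_of_real by simp
  then have "norm x < fps_conv_radius F"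
    using assms by (intro less_le_trans[OF _ radius]) simp
  then have "(\<Sum>i\<le>D. poly (c i) x * eval_fps F x ^ i) = 0"
    using eval_fps_poly_relation[of x F c "{..D}"] relation by simp
  moreover have "poly (pcompose (c i) [:1, -1:] * monom 1 (2 * (D - i))) (of_real s)
      * (of_real (s\<^sup>2) * eval_fps F x) ^ i = of_real s ^ (2 * D) * (poly (c i) x * eval_fps F x ^ i)"
    if "i \<le> D" for i
  proof -
    have "(of_real (s\<^sup>2) * eval_fps F x) ^ i = of_real s ^ (2 * i) * eval_fps F x ^ i"
      by (simp add: power_mult_distrib power_mult)
    moreover have "poly (pcompose (c i) [:1, -1:] * monom 1 (2 * (D - i))) (of_real s)
        = of_real s ^ (2 * (D - i)) * poly (c i) x"
      by (simp add: x_def poly_pcompose poly_monom)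
    moreover have "2 * D = 2 * (D - i) + 2 * i"
      using that by simp
    ultimately show ?thesis
      by (simp add: power_add mult_ac)
  qed
  ultimately show ?thesis
    by (simp add: x_def sum_distrib_left[symmetric])
qed

section \<open>Functions of logarithmic growth satisfy no polynomial relation\<close>

lemma poly_eq_monom_mult_nonvanishing_at_0:
  fixes p :: "'a::idom poly"
  assumes "p \<noteq> 0"
  shows "\<exists>e u. p = monom 1 e * u \<and> poly u 0 \<noteq> 0"
proof -
  obtain u where "p = [:0, 1:] ^ order 0 p * u" and "\<not> [:0, 1:] dvd u"
    using order_decomp[OF assms, of 0] by auto
  then show ?thesis
    using poly_eq_0_iff_dvd[of u 0] by (auto simp: monom_altdef)
qed

lemma ex_min_weight_max_index:
  fixes e :: "'i::linorder \<Rightarrow> 'w::linorder"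
  assumes "finite I" "I \<noteq> {}"
  obtains i0 where "i0 \<in> I" "\<And>i. i \<in> I \<Longrightarrow> e i0 \<le> e i"
    "\<And>i. i \<in> I \<Longrightarrow> e i = e i0 \<Longrightarrow> i \<le> i0"
proof -
  define J where "J = {i \<in> I. e i = Min (e ` I)}"
  have "Min (e ` I) \<in> e ` I"
    using assms by simp
  then have "J \<noteq> {}"
    unfolding J_def by force
  moreover have "finite J"
    using assms by (simp add: J_def)
  ultimately have "Max J \<in> J"
    by (rule Max_in[rotated])
  then show ?thesis
    using assms \<open>finite J\<close> by (intro that[of "Max J"]) (auto simp: J_def)
qed

lemma sum_monom_mult_power_factor_dominant:
  fixes x K :: "'a::field"
  assumes "K \<noteq> 0" "\<And>i. i \<in> I \<Longrightarrow> e i0 \<le> e i"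
  shows "(\<Sum>i\<in>I. poly (monom 1 (e i) * u i) x * K ^ i)
    = x ^ e i0 * K ^ i0 * (\<Sum>i\<in>I. x ^ (e i - e i0) * K powi (int i - int i0) * poly (u i) x)"
  unfolding sum_distrib_left
proof (rule sum.cong[OF refl])
  fix i
  assume "i \<in> I"
  have "K ^ i = K ^ i0 * K powi (int i - int i0)"
    using assms(1) power_int_add[of K "int i0" "int i - int i0"] by simp
  moreover have "x ^ e i = x ^ e i0 * x ^ (e i - e i0)"
    using assms(2)[OF \<open>i \<in> I\<close>] by (simp flip: power_add)
  ultimately show "poly (monom 1 (e i) * u i) x * K ^ i
      = x ^ e i0 * K ^ i0 * (x ^ (e i - e i0) * K powi (int i - int i0) * poly (u i) x)"
    by (simp add: poly_monom mult_ac)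
qed

lemma tendsto_mult_power_0_if_log_bounded:
  fixes K :: "real \<Rightarrow> 'a::real_normed_vector"
  assumes "\<forall>\<^sub>F s in at_right 0. norm (K s) \<le> C * ln (1 / s)"
  shows "((\<lambda>s. s * norm (K s) ^ j) \<longlongrightarrow> 0) (at_right 0)"
proof (rule Lim_null_comparison)
  show "((\<lambda>s. C ^ j * (s * ln (1 / s) ^ j)) \<longlongrightarrow> 0) (at_right 0)"
    by (intro tendsto_mult_right_zero) real_asymp
  show "\<forall>\<^sub>F s in at_right 0. norm (s * norm (K s) ^ j) \<le> C ^ j * (s * ln (1 / s) ^ j)"
    using assms eventually_at_right_real[OF zero_less_one]
  proof eventually_elim
    case (elim s)
    then have "norm (s * norm (K s) ^ j) \<le> s * (C * ln (1 / s)) ^ j"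
      by (auto intro!: mult_left_mono power_mono)
    also have "\<dots> = C ^ j * (s * ln (1 / s) ^ j)"
      by (simp only: power_mult_distrib mult.left_commute)
    finally show ?case .
  qed
qed

lemma tendsto_0_monomial_if_log_bounded:
  fixes K :: "real \<Rightarrow> 'a::real_normed_field"
  assumes grows: "filterlim (\<lambda>s. norm (K s)) at_top (at_right 0)"
    and log_bound: "\<forall>\<^sub>F s in at_right 0. norm (K s) \<le> C * ln (1 / s)"
    and "k < 0 \<or> n > 0"
  shows "((\<lambda>s. of_real s ^ n * K s powi k) \<longlongrightarrow> 0) (at_right 0)"
proof (cases "k < 0")
  case True
  define j where "j = nat (- k)"
  have powi: "K s powi k = inverse (K s ^ j)" for s
    using True by (simp add: j_def power_int_def power_inverse)
  have "\<forall>\<^sub>F s in at_right 0. norm (of_real s ^ n * K s powi k) \<le> inverse (norm (K s) ^ j)"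
    using eventually_at_right_real[OF zero_less_one]
    by eventually_elim (simp add: powi norm_mult norm_power norm_inverse mult_left_le_one_le power_le_one)
  moreover have "((\<lambda>s. inverse (norm (K s) ^ j)) \<longlongrightarrow> 0) (at_right 0)"
    using True by (intro tendsto_inverse_0_at_top filterlim_pow_at_top grows) (simp add: j_def)
  ultimately show ?thesis
    by (rule Lim_null_comparison)
next
  case False
  define j where "j = nat k"
  have powi: "K s powi k = K s ^ j" for s
    using False by (simp add: j_def power_int_def)
  have "\<forall>\<^sub>F s in at_right 0. norm (of_real s ^ n * K s powi k) \<le> s * norm (K s) ^ j"
    using eventually_at_right_real[OF zero_less_one]
  proof eventually_elim
    case (elim s)
    have "s ^ n \<le> s"
      using elim power_decreasing[of 1 n s] False assms(3) by auto
    then show ?case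
      using elim by (simp add: powi norm_mult norm_power mult_right_mono)
  qed
  then show ?thesis
    by (rule Lim_null_comparison[OF _ tendsto_mult_power_0_if_log_bounded[OF log_bound]])
qed

lemma tendsto_sum_relative_to_dominant_term:
  fixes K :: "real \<Rightarrow> 'a::real_normed_field" and u :: "nat \<Rightarrow> 'a poly"
  assumes grows: "filterlim (\<lambda>s. norm (K s)) at_top (at_right 0)"
    and log_bound: "\<forall>\<^sub>F s in at_right 0. norm (K s) \<le> C * ln (1 / s)"
    and "finite I" "i0 \<in> I"
    and min_weight: "\<And>i. i \<in> I \<Longrightarrow> e i0 \<le> e i"
    and max_index: "\<And>i. i \<in> I \<Longrightarrow> e i = e i0 \<Longrightarrow> i \<le> i0"
  shows "((\<lambda>s. \<Sum>i\<in>I. of_real s ^ (e i - e i0) * K s powi (int i - int i0) * poly (u i) (of_real s))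
    \<longlongrightarrow> poly (u i0) 0) (at_right 0)"
proof -
  have "((\<lambda>s. of_real s ^ (e i - e i0) * K s powi (int i - int i0) * poly (u i) (of_real s))
      \<longlongrightarrow> (if i = i0 then poly (u i0) 0 else 0)) (at_right 0)" if "i \<in> I" for i
  proof -
    have "((\<lambda>s. poly (u i) (of_real s)) \<longlongrightarrow> poly (u i) (of_real 0)) (at_right 0)"
      by (intro tendsto_intros)
    then have u_lim: "((\<lambda>s. poly (u i) (of_real s)) \<longlongrightarrow> poly (u i) 0) (at_right 0)"
      by simp
    show ?thesis
    proof (cases "i = i0")
      case True
      with u_lim show ?thesis
        by simp
    next
      case False
      then have "((\<lambda>s. of_real s ^ (e i - e i0) * K s powi (int i - int i0)) \<longlongrightarrow> 0) (at_right 0)"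
        using min_weight[OF that] max_index[OF that]
        by (intro tendsto_0_monomial_if_log_bounded[OF grows log_bound]) linarith
      from tendsto_mult[OF this u_lim] show ?thesis
        using False by simp
    qed
  qed
  then have "((\<lambda>s. \<Sum>i\<in>I. of_real s ^ (e i - e i0) * K s powi (int i - int i0) * poly (u i) (of_real s))
      \<longlongrightarrow> (\<Sum>i\<in>I. if i = i0 then poly (u i0) 0 else 0)) (at_right 0)"
    by (rule tendsto_sum)
  then show ?thesis
    using \<open>finite I\<close> \<open>i0 \<in> I\<close> by simp
qed

lemma no_poly_relation_if_log_growth:
  fixes K :: "real \<Rightarrow> 'a::real_normed_field" and p :: "nat \<Rightarrow> 'a poly"
  assumes grows: "filterlim (\<lambda>s. norm (K s)) at_top (at_right 0)"
    and log_bound: "\<forall>\<^sub>F s in at_right 0. norm (K s) \<le> C * ln (1 / s)"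
    and nontrivial: "\<exists>i\<le>D. p i \<noteq> 0"
  shows "\<not> (\<forall>\<^sub>F s in at_right 0. (\<Sum>i\<le>D. poly (p i) (of_real s) * K s ^ i) = 0)"
proof
  assume relation: "\<forall>\<^sub>F s in at_right 0. (\<Sum>i\<le>D. poly (p i) (of_real s) * K s ^ i) = 0"
  define I where "I = {i. i \<le> D \<and> p i \<noteq> 0}"
  have "finite I" "I \<noteq> {}"
    using nontrivial by (auto simp: I_def)
  have "\<forall>i\<in>I. \<exists>e u. p i = monom 1 e * u \<and> poly u 0 \<noteq> 0"
    using poly_eq_monom_mult_nonvanishing_at_0 by (auto simp: I_def)
  then obtain e u where p: "\<And>i. i \<in> I \<Longrightarrow> p i = monom 1 (e i) * u i"
    and u: "\<And>i. i \<in> I \<Longrightarrow> poly (u i) 0 \<noteq> 0"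
    by metis
  obtain i0 where "i0 \<in> I" and min_weight: "\<And>i. i \<in> I \<Longrightarrow> e i0 \<le> e i"
    and max_index: "\<And>i. i \<in> I \<Longrightarrow> e i = e i0 \<Longrightarrow> i \<le> i0"
    using ex_min_weight_max_index[OF \<open>finite I\<close> \<open>I \<noteq> {}\<close>, of e] by blast
  \<comment> \<open>T s is the relation divided by its dominant term s^(e i0) * K s^i0.\<close>
  define T where "T s = (\<Sum>i\<in>I. of_real s ^ (e i - e i0) * K s powi (int i - int i0) * poly (u i) (of_real s))"
    for s
  have "(T \<longlongrightarrow> poly (u i0) 0) (at_right 0)"
    unfolding T_def using grows log_bound \<open>finite I\<close> \<open>i0 \<in> I\<close> min_weight max_index
    by (rule tendsto_sum_relative_to_dominant_term)
  moreover have "\<forall>\<^sub>F s in at_right 0. T s = 0"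
    using relation eventually_at_right_real[OF zero_less_one]
      grows[unfolded filterlim_at_top_dense, rule_format, of 0]
  proof eventually_elim
    case (elim s)
    then have "K s \<noteq> 0"
      by auto
    have "(\<Sum>i\<le>D. poly (p i) (of_real s) * K s ^ i) = (\<Sum>i\<in>I. poly (p i) (of_real s) * K s ^ i)"
      by (rule sum.mono_neutral_right) (auto simp: I_def)
    also have "\<dots> = (\<Sum>i\<in>I. poly (monom 1 (e i) * u i) (of_real s) * K s ^ i)"
      by (rule sum.cong) (simp_all add: p)
    also have "\<dots> = of_real s ^ e i0 * K s ^ i0 * T s"
      unfolding T_def using \<open>K s \<noteq> 0\<close> min_weight by (rule sum_monom_mult_power_factor_dominant)
    finally show ?case
      using elim \<open>K s \<noteq> 0\<close> by simp
  qed
  then have "(T \<longlongrightarrow> 0) (at_right 0)"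
    by (simp add: tendsto_eventually)
  ultimately have "poly (u i0) 0 = 0"
    by (rule tendsto_unique[OF trivial_limit_at_right_real])
  then show False
    using u \<open>i0 \<in> I\<close> by blast
qed

lemma transcendental_if_log_growth:
  fixes a :: "nat \<Rightarrow> real"
  assumes nonneg: "\<And>n. 0 \<le> a n"
    and summable: "\<And>r. 0 < r \<Longrightarrow> r < 1 \<Longrightarrow> summable (\<lambda>n. a n * r ^ n)"
    and grows: "filterlim (\<lambda>s. s\<^sup>2 * (\<Sum>n. a n * (1 - s) ^ n)) at_top (at_right 0)"
    and log_bound: "\<forall>\<^sub>F s in at_right 0. s\<^sup>2 * (\<Sum>n. a n * (1 - s) ^ n) \<le> C * ln (1 / s)"
  shows "transcendental_over_rat_funs (fps_to_fls (Abs_fps (\<lambda>n. of_real (a n))))"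
  unfolding transcendental_over_rat_funs_def
proof
  define F :: "complex fps" where "F = Abs_fps (\<lambda>n. of_real (a n))"
  assume "algebraic_over_rat_funs (fps_to_fls (Abs_fps (\<lambda>n. of_real (a n))))"
  then obtain c D where nontrivial: "\<exists>i\<le>D. c i \<noteq> 0"
    and relation: "(\<Sum>i\<le>D. fps_of_poly (c i) * F ^ i) = 0"
    unfolding F_def by (rule algebraic_over_rat_funs_imp_poly_relation)
  have radius: "1 \<le> fps_conv_radius F"
    unfolding F_def using summable by (rule fps_conv_radius_ge_1_if_summable)
  \<comment> \<open>With x = 1 - s and after multiplication by s^(2D), F enters only through K s = s^2 F(1 - s).\<close>
  define K where "K s = of_real (s\<^sup>2) * eval_fps F (of_real (1 - s))" for s :: real
  define p where "p i = pcompose (c i) [:1, -1:] * monom 1 (2 * (D - i))" for i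
  have norm_K: "\<forall>\<^sub>F s in at_right 0. norm (K s) = s\<^sup>2 * (\<Sum>n. a n * (1 - s) ^ n)"
    using eventually_at_right_real[OF zero_less_one]
  proof eventually_elim
    case (elim s)
    then have "0 \<le> (\<Sum>n. a n * (1 - s) ^ n)"
      using summable[of "1 - s"] nonneg by (intro suminf_nonneg) auto
    then show ?case
      using elim eval_fps_Abs_fps_of_real[OF summable, of "1 - s"]
      by (simp add: K_def F_def norm_mult norm_power)
  qed
  have "filterlim (\<lambda>s. norm (K s)) at_top (at_right 0)"
    using grows by (rule filterlim_cong[THEN iffD2, OF refl refl norm_K])
  moreover have "\<forall>\<^sub>F s in at_right 0. norm (K s) \<le> C * ln (1 / s)"
    using log_bound norm_K by eventually_elim simp
  moreover have "\<exists>i\<le>D. p i \<noteq> 0"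
    using nontrivial by (auto simp: p_def pcompose_eq_0_iff)
  moreover have "\<forall>\<^sub>F s in at_right 0. (\<Sum>i\<le>D. poly (p i) (of_real s) * K s ^ i) = 0"
    using eventually_at_right_real[OF zero_less_one]
    by eventually_elim (use poly_relation_at_1[OF radius relation] in \<open>simp add: p_def K_def\<close>)
  ultimately show False
    using no_poly_relation_if_log_growth by blast
qed

section \<open>Pillai's gcd sum\<close>

definition gcd_sum :: "nat \<Rightarrow> nat" where
  "gcd_sum n = (\<Sum>m=1..n. gcd m n)"

lemma gcd_sum_0 [simp]: "gcd_sum 0 = 0"
  by (simp add: gcd_sum_def)

lemma gcd_sum_eq_sum_gcd_diff_add: "gcd_sum N = (\<Sum>m=1..<N. gcd m (N - m)) + N"
proof (cases "N = 0")
  case False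
  have "(\<Sum>m=1..<N. gcd m (N - m)) = (\<Sum>m=1..<N. gcd m N)"
    by (intro sum.cong refl) (metis gcd_add2 atLeastLessThan_iff le_add_diff_inverse less_imp_le)
  moreover have "{1..N} = insert N {1..<N}"
    using False by auto
  ultimately show ?thesis
    by (simp add: gcd_sum_def)
qed (simp add: gcd_sum_def)

lemma sum_divisors_swap:
  fixes N :: nat
  shows "(\<Sum>n=1..N. \<Sum>d | d dvd n. f d (n div d)) = (\<Sum>d=1..N. \<Sum>k=1..N div d. f d k)"
proof -
  have "(\<Sum>n=1..N. \<Sum>d | d dvd n. f d (n div d))
      = (\<Sum>(n, d)\<in>(SIGMA n:{1..N}. {d. d dvd n}). f d (n div d))"
    by (rule sum.Sigma) auto
  also have "\<dots> = (\<Sum>(d, k)\<in>(SIGMA d:{1..N}. {1..N div d}). f d k)"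
  proof (rule sum.reindex_bij_witness[of _ "\<lambda>(d, k). (d * k, d)" "\<lambda>(n, d). (d, n div d)"])
    fix x
    assume "x \<in> (SIGMA d:{1..N}. {1..N div d})"
    then show "(case (case x of (d, k) \<Rightarrow> (d * k, d)) of (n, d) \<Rightarrow> (d, n div d)) = x"
      and "(case x of (d, k) \<Rightarrow> (d * k, d)) \<in> (SIGMA n:{1..N}. {d. d dvd n})"
      by (auto simp: less_eq_div_iff_mult_less_eq mult.commute)
  next
    fix y
    assume "y \<in> (SIGMA n:{1..N}. {d. d dvd n})"
    then obtain d k where "y = (d * k, d)" "1 \<le> d" "1 \<le> k" "d * k \<le> N"
      by auto
    moreover from this have "d \<le> N"
      using mult_le_mono2[OF \<open>1 \<le> k\<close>, of d] by linarith
    moreover from calculation have "k \<le> N div d"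
      by (simp add: less_eq_div_iff_mult_less_eq mult.commute)
    ultimately show "(case (case y of (n, d) \<Rightarrow> (d, n div d)) of (d, k) \<Rightarrow> (d * k, d)) = y"
      and "(case y of (n, d) \<Rightarrow> (d, n div d)) \<in> (SIGMA d:{1..N}. {1..N div d})"
      and "(case (case y of (n, d) \<Rightarrow> (d, n div d)) of (d, k) \<Rightarrow> f d k)
        = (case y of (n, d) \<Rightarrow> f d (n div d))"
      by auto
  qed
  also have "\<dots> = (\<Sum>d=1..N. \<Sum>k=1..N div d. f d k)"
    by (rule sum.Sigma[symmetric]) auto
  finally show ?thesis .
qed

lemma gcd_sum_eq_sum_totient: "gcd_sum n = (\<Sum>d | d dvd n. totient d * (n div d))"
proof (cases "n = 0")
  case True
  then show ?thesis
    by (simp add: gcd_sum_def)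
next
  case False
  have "gcd_sum n = (\<Sum>d | d dvd n. \<Sum>m\<in>{m\<in>{1..n}. gcd m n = d}. gcd m n)"
    unfolding gcd_sum_def using False by (intro sum.group[symmetric]) auto
  also have "\<dots> = (\<Sum>d | d dvd n. d * totient (n div d))"
  proof (rule sum.cong[OF refl])
    fix d
    assume "d \<in> {d. d dvd n}"
    moreover have "{m\<in>{1..n}. gcd m n = d} = {m\<in>{0<..n}. gcd m n = d}"
      by auto
    ultimately have "card {m\<in>{1..n}. gcd m n = d} = totient (n div d)"
      using card_gcd_eq_totient[of n d] False by simp
    then show "(\<Sum>m\<in>{m\<in>{1..n}. gcd m n = d}. gcd m n) = d * totient (n div d)"
      by simp
  qed
  also have "\<dots> = (\<Sum>d | d dvd n. totient d * (n div d))"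
    using False by (intro sum.reindex_bij_witness[of _ "(div) n" "(div) n"]) (auto simp: dvd_def)
  finally show ?thesis .
qed

lemma sum_gcd_sum_power:
  fixes r :: "'a::comm_semiring_1"
  shows "(\<Sum>n=1..N. of_nat (gcd_sum n) * r ^ n)
       = (\<Sum>d=1..N. of_nat (totient d) * (\<Sum>k=1..N div d. of_nat k * (r ^ d) ^ k))"
proof -
  have "of_nat (gcd_sum n) * r ^ n
      = (\<Sum>d | d dvd n. of_nat (totient d) * (of_nat (n div d) * (r ^ d) ^ (n div d)))" for n
  proof -
    have "of_nat (gcd_sum n) * r ^ n = (\<Sum>d | d dvd n. of_nat (totient d) * (of_nat (n div d) * r ^ n))"
      by (simp add: gcd_sum_eq_sum_totient sum_distrib_left mult_ac)
    also have "\<dots> = (\<Sum>d | d dvd n. of_nat (totient d) * (of_nat (n div d) * (r ^ d) ^ (n div d)))"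
      by (rule sum.cong[OF refl]) (simp flip: power_mult)
    finally show ?thesis .
  qed
  then show ?thesis
    using sum_divisors_swap[of "\<lambda>d k. of_nat (totient d) * (of_nat k * (r ^ d) ^ k)" N]
    by (simp add: sum_distrib_left)
qed

section \<open>Divergence of the sum of phi(d) / d^2\<close>

lemma sum_totient_div_ge:
  assumes "N \<ge> 1"
  shows "(real N + 1) / 2 \<le> (\<Sum>d=1..N. real (totient d) / real d)"
proof -
  have "real N * ((real N + 1) / 2) = (\<Sum>n=1..N. real n)"
    using double_gauss_sum_from_Suc_0[of N, where 'a=real] by simp
  also have "\<dots> = (\<Sum>n=1..N. \<Sum>d | d dvd n. real (totient d))"
    by (simp flip: of_nat_sum add: totient_divisor_sum)
  also have "\<dots> = (\<Sum>d=1..N. real (totient d) * real (N div d))"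
    using sum_divisors_swap[of "\<lambda>d k. real (totient d)" N] by (simp add: mult.commute)
  also have "\<dots> \<le> (\<Sum>d=1..N. real (totient d) * (real N / real d))"
    by (intro sum_mono mult_left_mono of_nat_div_le_of_nat) auto
  also have "\<dots> = real N * (\<Sum>d=1..N. real (totient d) / real d)"
    by (simp add: sum_distrib_left mult_ac)
  finally show ?thesis
    using assms by (simp only: mult_le_cancel_left_pos of_nat_0_less_iff)
qed

lemma sum_totient_div_square_block_ge:
  assumes "N \<ge> 1"
  shows "1 / 4 \<le> (\<Sum>d\<in>{N<..4 * N}. real (totient d) / real d ^ 2)"
proof -
  have "{1..4 * N} = {1..N} \<union> {N<..4 * N}"
    by auto
  then have "(\<Sum>d=1..4 * N. real (totient d) / real d)
      = (\<Sum>d=1..N. real (totient d) / real d) + (\<Sum>d\<in>{N<..4 * N}. real (totient d) / real d)"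
    by (simp only:) (rule sum.union_disjoint; auto)
  moreover have "(\<Sum>d=1..N. real (totient d) / real d) \<le> (\<Sum>d=1..N. 1 :: real)"
    by (intro sum_mono) (auto simp: totient_le)
  moreover have "(real (4 * N) + 1) / 2 \<le> (\<Sum>d=1..4 * N. real (totient d) / real d)"
    using assms by (intro sum_totient_div_ge) auto
  ultimately have "real N \<le> (\<Sum>d\<in>{N<..4 * N}. real (totient d) / real d)"
    by simp
  then have "1 / 4 \<le> (\<Sum>d\<in>{N<..4 * N}. real (totient d) / real d) / (4 * N)"
    using assms by (simp add: field_simps)
  also have "\<dots> = (\<Sum>d\<in>{N<..4 * N}. real (totient d) / real d / (4 * N))"
    by (simp add: sum_divide_distrib)
  also have "\<dots> \<le> (\<Sum>d\<in>{N<..4 * N}. real (totient d) / real d ^ 2)"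
    by (intro sum_mono) (auto simp: power2_eq_square divide_simps mult_left_mono)
  finally show ?thesis .
qed

lemma sum_totient_div_square_at_top:
  "filterlim (\<lambda>D. \<Sum>d=1..D. real (totient d) / real d ^ 2) at_top sequentially"
proof -
  have powers: "real J / 4 \<le> (\<Sum>d=1..4 ^ J. real (totient d) / real d ^ 2)" for J
  proof (induction J)
    case (Suc J)
    have "{1..4 ^ Suc J} = {1..4 ^ J} \<union> {4 ^ J<..4 * 4 ^ J :: nat}"
      by auto
    then have "(\<Sum>d=1..4 ^ Suc J. real (totient d) / real d ^ 2)
        = (\<Sum>d=1..4 ^ J. real (totient d) / real d ^ 2)
          + (\<Sum>d\<in>{4 ^ J<..4 * 4 ^ J}. real (totient d) / real d ^ 2)"
      by (simp only:) (rule sum.union_disjoint; auto)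
    then show ?case
      using Suc.IH sum_totient_div_square_block_ge[of "4 ^ J"] by simp
  qed (simp add: sum_nonneg)
  show ?thesis
    unfolding filterlim_at_top eventually_sequentially
  proof
    fix Z :: real
    obtain J :: nat where "4 * Z \<le> J"
      using real_arch_simple by blast
    have "Z \<le> (\<Sum>d=1..D. real (totient d) / real d ^ 2)" if "4 ^ J \<le> D" for D
    proof -
      have "(\<Sum>d=1..4 ^ J. real (totient d) / real d ^ 2) \<le> (\<Sum>d=1..D. real (totient d) / real d ^ 2)"
        using that by (intro sum_mono2) auto
      then show ?thesis
        using powers[of J] \<open>4 * Z \<le> J\<close> by linarith
    qed
    then show "\<exists>N. \<forall>D\<ge>N. Z \<le> (\<Sum>d=1..D. real (totient d) / real d ^ 2)"
      by blast
  qed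
qed

section \<open>Growth of the generating function of the gcd sum near 1\<close>

lemma sums_of_nat_mult_power:
  fixes q :: "'a::{real_normed_field,banach}"
  assumes "norm q < 1"
  shows "(\<lambda>k. of_nat k * q ^ k) sums (q / (1 - q)\<^sup>2)"
proof -
  have "(\<lambda>k. q * (of_nat (Suc k) * q ^ k)) sums (q * (1 / (1 - q)\<^sup>2))"
    using geometric_deriv_sums[OF assms] by (rule sums_mult)
  then have "(\<lambda>k. of_nat (Suc k) * q ^ Suc k) sums (q / (1 - q)\<^sup>2)"
    by (simp add: mult_ac)
  then show ?thesis
    by (subst (asm) sums_Suc_iff) simp
qed

lemma sum_of_nat_mult_power_eq_lessThan:
  "(\<Sum>k=1..K. of_nat k * q ^ k) = (\<Sum>k<Suc K. of_nat k * q ^ k :: 'a::comm_semiring_1)"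
  by (simp add: sum_shift_lb_Suc0_0 atLeast0AtMost lessThan_Suc_atMost)

lemma sum_of_nat_mult_power_le:
  fixes q :: real
  assumes "0 \<le> q" "q < 1"
  shows "(\<Sum>k=1..K. real k * q ^ k) \<le> q / (1 - q)\<^sup>2"
proof -
  have sums: "(\<lambda>k. real k * q ^ k) sums (q / (1 - q)\<^sup>2)"
    using assms by (intro sums_of_nat_mult_power) simp
  have "(\<Sum>k<Suc K. real k * q ^ k) \<le> (\<Sum>k. real k * q ^ k)"
    using sums assms by (intro sum_le_suminf) (auto simp: sums_iff)
  then show ?thesis
    using sums by (simp only: sum_of_nat_mult_power_eq_lessThan sums_iff)
qed

lemma LIMSEQ_sum_of_nat_mult_power:
  fixes q :: real
  assumes "0 \<le> q" "q < 1"
  shows "(\<lambda>K. \<Sum>k=1..K. real k * q ^ k) \<longlonglongrightarrow> q / (1 - q)\<^sup>2"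
proof -
  have "(\<lambda>k. real k * q ^ k) sums (q / (1 - q)\<^sup>2)"
    using assms by (intro sums_of_nat_mult_power) simp
  then show ?thesis
    unfolding sum_of_nat_mult_power_eq_lessThan sums_def by (rule LIMSEQ_Suc)
qed

lemma one_minus_power_ge:
  fixes r :: real
  assumes "0 \<le> r" "r \<le> 1"
  shows "real d * (1 - r) * r ^ d \<le> 1 - r ^ d"
proof -
  have "real d * r ^ d = (\<Sum>i<d. r ^ d)"
    by simp
  also have "\<dots> \<le> (\<Sum>i<d. r ^ i)"
    using assms by (intro sum_mono power_decreasing) auto
  finally have "(1 - r) * (real d * r ^ d) \<le> (1 - r) * (\<Sum>i<d. r ^ i)"
    using assms by (intro mult_left_mono) auto
  then show ?thesis
    by (simp add: one_diff_power_eq mult_ac)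
qed

lemma lambert_term_le_if_small:
  fixes r :: real
  assumes "0 < r" "r < 1" "d \<ge> 1" "real d * (1 - r) \<le> 1 / 2"
  shows "real d * r ^ d / (1 - r ^ d)\<^sup>2 \<le> 2 / (real d * (1 - r)\<^sup>2)"
proof -
  define s where "s = 1 - r"
  have "0 < s" "0 < r ^ d" "r ^ d < 1"
    using assms by (auto simp: s_def power_less_one_iff)
  have "1 / 2 \<le> 1 + real d * (r - 1)"
    using assms by (simp add: algebra_simps)
  also have "\<dots> \<le> r ^ d"
    using Bernoulli_inequality[of "r - 1" d] assms by simp
  finally have "1 / 2 \<le> r ^ d" .
  have "0 < real d * s * r ^ d"
    using assms \<open>0 < s\<close> \<open>0 < r ^ d\<close> by simp
  then have "real d * r ^ d / (1 - r ^ d)\<^sup>2 \<le> real d * r ^ d / (real d * s * r ^ d)\<^sup>2"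
    using one_minus_power_ge[of r d] assms \<open>0 < r ^ d\<close> \<open>r ^ d < 1\<close>
    by (intro divide_left_mono power_mono mult_pos_pos) (auto simp: s_def)
  also have "\<dots> = 1 / (real d * s\<^sup>2 * r ^ d)"
    using assms \<open>0 < s\<close> \<open>0 < r ^ d\<close> by (simp add: field_simps power2_eq_square)
  also have "\<dots> \<le> 2 / (real d * s\<^sup>2)"
    using assms \<open>0 < s\<close> \<open>1 / 2 \<le> r ^ d\<close> by (simp add: field_simps)
  finally show ?thesis
    by (simp add: s_def)
qed

lemma lambert_term_le_if_large:
  fixes r :: real
  assumes "0 \<le> r" "r < 1" "1 / 2 < real d * (1 - r)"
  shows "r ^ d / (1 - r ^ d)\<^sup>2 \<le> 9 * r ^ d"
proof -
  have "d \<noteq> 0"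
    using assms by (cases "d = 0") auto
  then have "r ^ d < 1"
    using assms by (simp add: power_less_one_iff)
  have "1 / 2 * r ^ d \<le> real d * (1 - r) * r ^ d"
    using assms by (intro mult_right_mono) auto
  then have "r ^ d / 2 \<le> 1 - r ^ d"
    using one_minus_power_ge[of r d] assms by linarith
  then have "(1 / 3)\<^sup>2 \<le> (1 - r ^ d)\<^sup>2"
    by (intro power_mono) auto
  then have "r ^ d / (1 - r ^ d)\<^sup>2 \<le> r ^ d / (1 / 3)\<^sup>2"
    using assms \<open>r ^ d < 1\<close> by (intro divide_left_mono) auto
  then show ?thesis
    by (simp add: power2_eq_square)
qed

lemma sum_gcd_sum_power_le_lambert:
  fixes r :: real
  assumes "0 < r" "r < 1"
  shows "(\<Sum>n<N. real (gcd_sum n) * r ^ n) \<le> (\<Sum>d=1..N. real d * (r ^ d / (1 - r ^ d)\<^sup>2))"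
proof -
  have "(\<Sum>n<N. real (gcd_sum n) * r ^ n) \<le> (\<Sum>n<Suc N. real (gcd_sum n) * r ^ n)"
    using assms by (intro sum_mono2) auto
  also have "\<dots> = (\<Sum>n=1..N. real (gcd_sum n) * r ^ n)"
    by (simp add: sum_shift_lb_Suc0_0 atLeast0AtMost lessThan_Suc_atMost)
  also have "\<dots> = (\<Sum>d=1..N. real (totient d) * (\<Sum>k=1..N div d. real k * (r ^ d) ^ k))"
    by (rule sum_gcd_sum_power)
  also have "\<dots> \<le> (\<Sum>d=1..N. real d * (r ^ d / (1 - r ^ d)\<^sup>2))"
  proof (intro sum_mono mult_mono)
    fix d
    assume "d \<in> {1..N}"
    then have "r ^ d < 1"
      using assms by (simp add: power_less_one_iff)
    then show "(\<Sum>k=1..N div d. real k * (r ^ d) ^ k) \<le> r ^ d / (1 - r ^ d)\<^sup>2"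
      using assms by (intro sum_of_nat_mult_power_le) auto
  qed (use assms in \<open>auto simp: totient_le intro!: sum_nonneg\<close>)
  finally show ?thesis .
qed

lemma sum_gcd_sum_power_le:
  fixes r :: real
  assumes "0 < r" "r < 1"
  defines "M \<equiv> nat \<lfloor>1 / (2 * (1 - r))\<rfloor>"
  shows "(\<Sum>n<N. real (gcd_sum n) * r ^ n) \<le> (2 * harm M + 9) / (1 - r)\<^sup>2"
proof -
  define s where "s = 1 - r"
  have "0 < s"
    using assms by (simp add: s_def)
  \<comment> \<open>Terms with d < 1 / (2 s) contribute about 1 / (d s^2); the others decay geometrically.\<close>
  have "(\<Sum>n<N. real (gcd_sum n) * r ^ n) \<le> (\<Sum>d=1..N. real d * (r ^ d / (1 - r ^ d)\<^sup>2))"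
    using assms(1,2) by (rule sum_gcd_sum_power_le_lambert)
  also have "\<dots> \<le> (\<Sum>d=1..N. (if real d * s \<le> 1 / 2 then 2 / (real d * s\<^sup>2) else 0)
      + 9 * (real d * r ^ d))"
  proof (intro sum_mono)
    fix d
    assume "d \<in> {1..N}"
    show "real d * (r ^ d / (1 - r ^ d)\<^sup>2)
        \<le> (if real d * s \<le> 1 / 2 then 2 / (real d * s\<^sup>2) else 0) + 9 * (real d * r ^ d)"
    proof (cases "real d * s \<le> 1 / 2")
      case True
      then show ?thesis
        using lambert_term_le_if_small[of r d] assms \<open>d \<in> {1..N}\<close> by (simp add: s_def add_increasing2)
    next
      case False
      then show ?thesis
        using mult_left_mono[OF lambert_term_le_if_large[of r d], of "real d"] assms by (simp add: s_def)
    qed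
  qed
  also have "\<dots> = (\<Sum>d\<in>{d \<in> {1..N}. real d * s \<le> 1 / 2}. 2 / (real d * s\<^sup>2))
      + 9 * (\<Sum>d=1..N. real d * r ^ d)"
    by (simp only: sum.distrib sum_distrib_left sum.inter_filter[OF finite_atLeastAtMost])
  also have "\<dots> \<le> (\<Sum>d=1..M. 2 / (real d * s\<^sup>2)) + 9 * (r / s\<^sup>2)"
  proof (intro add_mono mult_left_mono sum_mono2)
    show "{d \<in> {1..N}. real d * s \<le> 1 / 2} \<subseteq> {1..M}"
      using \<open>0 < s\<close> by (auto simp: M_def s_def field_simps intro!: le_nat_floor)
    show "(\<Sum>d=1..N. real d * r ^ d) \<le> r / s\<^sup>2"
      using sum_of_nat_mult_power_le[of r N] assms by (simp add: s_def)
  qed auto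
  also have "\<dots> = 2 * harm M / s\<^sup>2 + 9 * (r / s\<^sup>2)"
    unfolding harm_def sum_distrib_left sum_divide_distrib by (simp add: field_simps)
  also have "\<dots> \<le> (2 * harm M + 9) / s\<^sup>2"
    using assms \<open>0 < s\<close> by (simp add: field_simps)
  finally show ?thesis
    by (simp add: s_def)
qed

lemma summable_gcd_sum_power:
  fixes r :: real
  assumes "0 < r" "r < 1"
  shows "summable (\<lambda>n. real (gcd_sum n) * r ^ n)"
  using assms sum_gcd_sum_power_le[OF assms] by (intro summableI_nonneg_bounded) auto

lemma gcd_sum_series_le_log:
  fixes s :: real
  assumes "0 < s" "s < 1"
  shows "s\<^sup>2 * (\<Sum>n. real (gcd_sum n) * (1 - s) ^ n) \<le> 2 * ln (1 / s) + 11"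
proof -
  define M where "M = nat \<lfloor>1 / (2 * s)\<rfloor>"
  have "(\<Sum>n. real (gcd_sum n) * (1 - s) ^ n) \<le> (2 * harm M + 9) / s\<^sup>2"
    using sum_gcd_sum_power_le[of "1 - s"] summable_gcd_sum_power[of "1 - s"] assms
    by (intro suminf_le_const) (auto simp: M_def)
  then have "s\<^sup>2 * (\<Sum>n. real (gcd_sum n) * (1 - s) ^ n) \<le> 2 * harm M + 9"
    using assms by (simp add: field_simps)
  moreover have "harm M \<le> ln (1 / s) + 1"
  proof (cases "M = 0")
    case True
    then show ?thesis
      using assms by (simp add: harm_def)
  next
    case False
    have "harm M - ln (real M) \<le> harm 1 - ln (real 1)"
      using False by (intro euler_mascheroni_sequence_decreasing) auto
    then have "harm M \<le> ln (real M) + 1"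
      by (simp add: harm_def)
    moreover have "real M \<le> 1 / (2 * s)"
      unfolding M_def using assms by (intro of_nat_floor) simp
    then have "real M \<le> 1 / s"
      using assms by (simp add: field_simps)
    then have "ln (real M) \<le> ln (1 / s)"
      using False by (intro ln_mono) auto
    ultimately show ?thesis
      by linarith
  qed
  ultimately show ?thesis
    by linarith
qed

lemma gcd_sum_series_log_bound:
  "\<forall>\<^sub>F s in at_right 0. s\<^sup>2 * (\<Sum>n. real (gcd_sum n) * (1 - s) ^ n) \<le> 3 * ln (1 / s)"
proof -
  have "\<forall>\<^sub>F s in at_right 0. 11 \<le> ln (1 / s :: real)"
    by real_asymp
  with eventually_at_right_real[OF zero_less_one] show ?thesis
  proof eventually_elim
    case (elim s)
    then show ?case
      using gcd_sum_series_le_log[of s] by simp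
  qed
qed

lemma sum_totient_lambert_le_suminf:
  fixes r :: real
  assumes "0 < r" "r < 1"
  shows "(\<Sum>d=1..D. real (totient d) * (r ^ d / (1 - r ^ d)\<^sup>2)) \<le> (\<Sum>n. real (gcd_sum n) * r ^ n)"
proof (rule LIMSEQ_le_const2)
  show "(\<lambda>K. \<Sum>d=1..D. real (totient d) * (\<Sum>k=1..K. real k * (r ^ d) ^ k))
      \<longlonglongrightarrow> (\<Sum>d=1..D. real (totient d) * (r ^ d / (1 - r ^ d)\<^sup>2))"
    using assms by (intro tendsto_sum tendsto_mult_left LIMSEQ_sum_of_nat_mult_power)
      (auto simp: power_less_one_iff)
  show "\<exists>N. \<forall>K\<ge>N. (\<Sum>d=1..D. real (totient d) * (\<Sum>k=1..K. real k * (r ^ d) ^ k))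
      \<le> (\<Sum>n. real (gcd_sum n) * r ^ n)"
  proof (intro exI allI impI)
    fix K :: nat
    assume "1 \<le> K"
    have "(\<Sum>d=1..D. real (totient d) * (\<Sum>k=1..K. real k * (r ^ d) ^ k))
        \<le> (\<Sum>d=1..D. real (totient d) * (\<Sum>k=1..D * K div d. real k * (r ^ d) ^ k))"
    proof (intro sum_mono mult_left_mono sum_mono2)
      fix d
      assume "d \<in> {1..D}"
      then have "K \<le> D * K div d"
        by (simp add: less_eq_div_iff_mult_less_eq mult.commute)
      then show "{1..K} \<subseteq> {1..D * K div d}"
        by auto
    qed (use assms in auto)
    also have "\<dots> \<le> (\<Sum>d=1..D * K. real (totient d) * (\<Sum>k=1..D * K div d. real k * (r ^ d) ^ k))"
      using assms \<open>1 \<le> K\<close> by (intro sum_mono2) (auto intro!: mult_nonneg_nonneg sum_nonneg)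
    also have "\<dots> = (\<Sum>n=1..D * K. real (gcd_sum n) * r ^ n)"
      by (rule sum_gcd_sum_power[symmetric])
    also have "\<dots> = (\<Sum>n<Suc (D * K). real (gcd_sum n) * r ^ n)"
      by (simp add: sum_shift_lb_Suc0_0 atLeast0AtMost lessThan_Suc_atMost)
    also have "\<dots> \<le> (\<Sum>n. real (gcd_sum n) * r ^ n)"
      using assms by (intro sum_le_suminf summable_gcd_sum_power) auto
    finally show "(\<Sum>d=1..D. real (totient d) * (\<Sum>k=1..K. real k * (r ^ d) ^ k))
        \<le> (\<Sum>n. real (gcd_sum n) * r ^ n)" .
  qed
qed

lemma sum_totient_div_square_le_gcd_sum_series:
  fixes s :: real
  assumes "0 < s" "s < 1"
  shows "(1 - s) ^ D * (\<Sum>d=1..D. real (totient d) / real d ^ 2)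
    \<le> s\<^sup>2 * (\<Sum>n. real (gcd_sum n) * (1 - s) ^ n)"
proof -
  define r where "r = 1 - s"
  have "0 < r" "r < 1"
    using assms by (auto simp: r_def)
  have "(1 - s) ^ D * (\<Sum>d=1..D. real (totient d) / real d ^ 2)
      = s\<^sup>2 * (\<Sum>d=1..D. real (totient d) * (r ^ D / (real d * s)\<^sup>2))"
    using assms by (simp add: r_def sum_distrib_left field_simps)
  also have "\<dots> \<le> s\<^sup>2 * (\<Sum>d=1..D. real (totient d) * (r ^ d / (1 - r ^ d)\<^sup>2))"
  proof (intro mult_left_mono sum_mono)
    fix d
    assume d: "d \<in> {1..D}"
    then have "0 < r ^ d" "r ^ d < 1"
      using \<open>0 < r\<close> \<open>r < 1\<close> by (auto simp: power_less_one_iff)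
    moreover have "1 - r ^ d \<le> real d * s"
      using Bernoulli_inequality[of "r - 1" d] \<open>0 < r\<close> by (simp add: r_def algebra_simps)
    moreover have "r ^ D \<le> r ^ d"
      using d \<open>0 < r\<close> \<open>r < 1\<close> by (intro power_decreasing) auto
    ultimately show "r ^ D / (real d * s)\<^sup>2 \<le> r ^ d / (1 - r ^ d)\<^sup>2"
      by (intro frac_le power_mono) auto
  qed auto
  also have "\<dots> \<le> s\<^sup>2 * (\<Sum>n. real (gcd_sum n) * r ^ n)"
    using \<open>0 < r\<close> \<open>r < 1\<close> by (intro mult_left_mono sum_totient_lambert_le_suminf) auto
  finally show ?thesis
    by (simp only: r_def)
qed

lemma gcd_sum_series_at_top:
  "filterlim (\<lambda>s. s\<^sup>2 * (\<Sum>n. real (gcd_sum n) * (1 - s) ^ n)) at_top (at_right 0)"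
  unfolding filterlim_at_top
proof
  fix Z :: real
  obtain D where D: "2 * \<bar>Z\<bar> \<le> (\<Sum>d=1..D. real (totient d) / real d ^ 2)"
    using sum_totient_div_square_at_top[unfolded filterlim_at_top, rule_format, of "2 * \<bar>Z\<bar>"]
    by (auto simp: eventually_sequentially)
  have "((\<lambda>s. (1 - s) ^ D) \<longlongrightarrow> (1 - 0) ^ D) (at_right (0::real))"
    by (intro tendsto_intros)
  then have "\<forall>\<^sub>F s in at_right 0. 1 / 2 < (1 - s :: real) ^ D"
    by (rule order_tendstoD) simp
  with eventually_at_right_real[OF zero_less_one]
  show "\<forall>\<^sub>F s in at_right 0. Z \<le> s\<^sup>2 * (\<Sum>n. real (gcd_sum n) * (1 - s) ^ n)"
  proof eventually_elim
    case (elim s)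
    have "Z \<le> 1 / 2 * (2 * \<bar>Z\<bar>)"
      by simp
    also have "\<dots> \<le> (1 - s) ^ D * (\<Sum>d=1..D. real (totient d) / real d ^ 2)"
      using elim D by (intro mult_mono) auto
    also have "\<dots> \<le> s\<^sup>2 * (\<Sum>n. real (gcd_sum n) * (1 - s) ^ n)"
      using elim by (intro sum_totient_div_square_le_gcd_sum_series) auto
    finally show ?case .
  qed
qed

lemma sums_gcd_sum_minus_power:
  fixes r :: real
  assumes "0 < r" "r < 1"
  shows "(\<lambda>n. real (gcd_sum n - n) * r ^ n) sums ((\<Sum>n. real (gcd_sum n) * r ^ n) - r / (1 - r)\<^sup>2)"
proof -
  have "n \<le> gcd_sum n" for n
    by (simp add: gcd_sum_eq_sum_gcd_diff_add)
  then have "real (gcd_sum n - n) * r ^ n = real (gcd_sum n) * r ^ n - real n * r ^ n" for n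
    by (simp add: algebra_simps)
  moreover have "(\<lambda>n. real n * r ^ n) sums (r / (1 - r)\<^sup>2)"
    using assms by (intro sums_of_nat_mult_power) simp
  ultimately show ?thesis
    using summable_gcd_sum_power[OF assms] by (simp add: sums_diff summable_sums)
qed

lemma gcd_sum_minus_series_eq:
  "\<forall>\<^sub>F s in at_right 0. s\<^sup>2 * (\<Sum>n. real (gcd_sum n - n) * (1 - s) ^ n)
    = (s - 1) + s\<^sup>2 * (\<Sum>n. real (gcd_sum n) * (1 - s) ^ n)"
  using eventually_at_right_real[OF zero_less_one]
  by eventually_elim (simp add: sums_unique[OF sums_gcd_sum_minus_power, symmetric] field_simps)

lemma gcd_sum_minus_series_at_top:
  "filterlim (\<lambda>s. s\<^sup>2 * (\<Sum>n. real (gcd_sum n - n) * (1 - s) ^ n)) at_top (at_right 0)"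
proof -
  have "((\<lambda>s. s - 1) \<longlongrightarrow> 0 - 1) (at_right (0::real))"
    by (intro tendsto_intros)
  then have "filterlim (\<lambda>s. (s - 1) + s\<^sup>2 * (\<Sum>n. real (gcd_sum n) * (1 - s) ^ n)) at_top (at_right 0)"
    using gcd_sum_series_at_top by (rule filterlim_tendsto_add_at_top)
  then show ?thesis
    using gcd_sum_minus_series_eq by (rule filterlim_cong[THEN iffD2, OF refl refl, rotated])
qed

lemma gcd_sum_minus_series_log_bound:
  "\<forall>\<^sub>F s in at_right 0. s\<^sup>2 * (\<Sum>n. real (gcd_sum n - n) * (1 - s) ^ n) \<le> 3 * ln (1 / s)"
  using gcd_sum_minus_series_eq gcd_sum_series_log_bound eventually_at_right_real[OF zero_less_one]
  by eventually_elim auto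

lemma Phi_diag_eq: "Phi_diag = fps_to_fls (Abs_fps (\<lambda>n. of_real (real (gcd_sum n - n))))"
  unfolding Phi_diag_def gcd_sum_eq_sum_gcd_diff_add by simp

lemma totient_series_eq: "totient_series = fps_to_fls (Abs_fps (\<lambda>n. of_real (real (gcd_sum n))))"
proof -
  have "(\<Sum>d | d dvd n. of_nat (totient d) / of_nat d) * of_nat n = (of_nat (gcd_sum n) :: complex)"
    if "n \<noteq> 0" for n
  proof -
    have "of_nat (totient d) / of_nat d * of_nat n = (of_nat (totient d * (n div d)) :: complex)"
      if "d dvd n" for d
      using \<open>n \<noteq> 0\<close> that by (auto simp: dvd_def)
    then show ?thesis
      by (simp add: gcd_sum_eq_sum_totient sum_distrib_right)
  qed
  then show ?thesis
    unfolding totient_series_def by (metis of_real_of_nat_eq of_nat_0 gcd_sum_0)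
qed

theorem theorem6p4:
  shows "transcendental_over_rat_funs Phi_diag \<and> transcendental_over_rat_funs totient_series"
proof
  show "transcendental_over_rat_funs Phi_diag"
    unfolding Phi_diag_eq
    by (rule transcendental_if_log_growth[OF _ sums_summable[OF sums_gcd_sum_minus_power]
          gcd_sum_minus_series_at_top gcd_sum_minus_series_log_bound]) simp_all
  show "transcendental_over_rat_funs totient_series"
    unfolding totient_series_eq
    by (rule transcendental_if_log_growth[OF _ summable_gcd_sum_power gcd_sum_series_at_top
          gcd_sum_series_log_bound]) simp
qed

end
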